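(* Let $m\ge1$, $m_\alpha\ge1$ be integers, $f_0\ne f_1$ probability densities on $\mathbb{R}$, and consider the change-point model, the statistics $S_n=\sum_{i=n-m+1}^n \ln\big(f_1(x_i)/f_0(x_i)\big)$ ($n\ge m$) and the FMA stopping time $T_{\mathrm{F}}(h)=\inf\{n\ge m: S_n\ge h\}$ described in the context. Let $F_0$ be the cumulative distribution function of $S_m=\sum_{i=1}^m\ln\big(f_1(x_i)/f_0(x_i)\big)$ under $\mathbb{P}_\infty$ and $F_1$ its cumulative distribution function under $\mathbb{P}_1$, and assume $F_0$ is invertible with inverse $F_0^{-1}$. Let $\tilde\alpha\in(0,1)$ and set $$h(\tilde\alpha)=F_0^{-1}\Big[(1-\tilde\alpha)^{1/m_\alpha}\Big].$$ Then $\mathbb{P}_{\mathrm{fa}}\big(T_{\mathrm{F}}(h(\tilde\alpha)),m_\alpha\big)\le\tilde\alpha$, and the missed-detection bound $\beta(h,m)=\mathbb{P}_1(S_m<h)$ evaluated at this threshold equals $$\beta\big(h(\tilde\alpha),m\big)=F_1\Big[F_0^{-1}\big[(1-\tilde\alpha)^{1/m_\alpha}\big]\Big].$$ Moreover, if $\tilde h$ is the threshold such that $\mathbb{P}_{\mathrm{fa}}\big(T_{\mathrm{F}}(\tilde h),m_\alpha\big)=\tilde\alpha$, then $$\mathbb{P}_{\mathrm{md}}\big(T_{\mathrm{F}}(\tilde h),m\big)\le\beta\big(h(\tilde\alpha),m\big).$$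
   Context: Change-point model: for each $v\in\{1,2,\dots\}\cup\{\infty\}$, $\mathbb{P}_v$ is a probability measure under which $x_1,x_2,\dots$ are mutually independent, $x_n$ has density $f_0$ if $n<v$ or $n\ge v+m$, and density $f_1$ if $v\le n<v+m$. Log-likelihood ratios are assumed to be well-defined real random variables. For a stopping time $T$: $\mathbb{P}_{\mathrm{fa}}(T,m_\alpha)=\sup_{l\ge1}\mathbb{P}_\infty(l\le T<l+m_\alpha)$ and $\mathbb{P}_{\mathrm{md}}(T,m)=\sup_{v\ge1}\mathbb{P}_v(T\ge v+m\mid T\ge v)$. *)

theory Defs
  imports "HOL-Probability.Probability"
begin

text \<open>Change-point model. Observations are indexed by positive naturals (index 0 is an
unused dummy coordinate, distributed by f0). The change time v ranges over enat,
with \<infinity> meaning "no change".\<close>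

definition obs_density :: "(real \<Rightarrow> real) \<Rightarrow> (real \<Rightarrow> real) \<Rightarrow> nat \<Rightarrow> enat \<Rightarrow> nat \<Rightarrow> real \<Rightarrow> real" where
  "obs_density f0 f1 m v n = (if v \<le> enat n \<and> enat n < v + enat m then f1 else f0)"

definition P_cp :: "(real \<Rightarrow> real) \<Rightarrow> (real \<Rightarrow> real) \<Rightarrow> nat \<Rightarrow> enat \<Rightarrow> (nat \<Rightarrow> real) measure" where
  "P_cp f0 f1 m v =
     PiM UNIV (\<lambda>n. density lborel (\<lambda>t. ennreal (obs_density f0 f1 m v n t)))"

definition llr :: "(real \<Rightarrow> real) \<Rightarrow> (real \<Rightarrow> real) \<Rightarrow> real \<Rightarrow> real" where
  "llr f0 f1 t = ln (f1 t / f0 t)"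

definition S_stat :: "(real \<Rightarrow> real) \<Rightarrow> (real \<Rightarrow> real) \<Rightarrow> nat \<Rightarrow> nat \<Rightarrow> (nat \<Rightarrow> real) \<Rightarrow> real" where
  "S_stat f0 f1 m n x = (\<Sum>i\<in>{n + 1 - m..n}. llr f0 f1 (x i))"

text \<open>FMA stopping time; inf of the empty set is \<infinity>.\<close>
definition T_FMA :: "(real \<Rightarrow> real) \<Rightarrow> (real \<Rightarrow> real) \<Rightarrow> nat \<Rightarrow> real \<Rightarrow> (nat \<Rightarrow> real) \<Rightarrow> enat" where
  "T_FMA f0 f1 m h x = Inf {enat n | n. m \<le> n \<and> h \<le> S_stat f0 f1 m n x}"

definition P_fa :: "(enat \<Rightarrow> (nat \<Rightarrow> real) measure) \<Rightarrow> ((nat \<Rightarrow> real) \<Rightarrow> enat) \<Rightarrow> nat \<Rightarrow> real" where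
  "P_fa P T ma = (SUP l\<in>{1::nat..}.
      measure (P \<infinity>) {x \<in> space (P \<infinity>). enat l \<le> T x \<and> T x < enat (l + ma)})"

definition P_md :: "(enat \<Rightarrow> (nat \<Rightarrow> real) measure) \<Rightarrow> ((nat \<Rightarrow> real) \<Rightarrow> enat) \<Rightarrow> nat \<Rightarrow> real" where
  "P_md P T m = (SUP v\<in>{1::nat..}.
      measure (P (enat v)) {x \<in> space (P (enat v)). enat (v + m) \<le> T x}
      / measure (P (enat v)) {x \<in> space (P (enat v)). enat v \<le> T x})"

definition F0_cdf :: "(real \<Rightarrow> real) \<Rightarrow> (real \<Rightarrow> real) \<Rightarrow> nat \<Rightarrow> real \<Rightarrow> real" where
  "F0_cdf f0 f1 m t = measure (P_cp f0 f1 m \<infinity>)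
      {x \<in> space (P_cp f0 f1 m \<infinity>). S_stat f0 f1 m m x \<le> t}"

definition F1_cdf :: "(real \<Rightarrow> real) \<Rightarrow> (real \<Rightarrow> real) \<Rightarrow> nat \<Rightarrow> real \<Rightarrow> real" where
  "F1_cdf f0 f1 m t = measure (P_cp f0 f1 m (enat 1))
      {x \<in> space (P_cp f0 f1 m (enat 1)). S_stat f0 f1 m m x \<le> t}"

definition beta_md :: "(real \<Rightarrow> real) \<Rightarrow> (real \<Rightarrow> real) \<Rightarrow> nat \<Rightarrow> real \<Rightarrow> real" where
  "beta_md f0 f1 m h = measure (P_cp f0 f1 m (enat 1))
      {x \<in> space (P_cp f0 f1 m (enat 1)). S_stat f0 f1 m m x < h}"

definition h_thr :: "(real \<Rightarrow> real) \<Rightarrow> (real \<Rightarrow> real) \<Rightarrow> nat \<Rightarrow> nat \<Rightarrow> real \<Rightarrow> real" where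
  "h_thr f0 f1 m ma a = inv (F0_cdf f0 f1 m) ((1 - a) powr (1 / real ma))"

end

theory Submission
  imports Defs
begin

(* False alarms: an alarm in a window of m_alpha steps under the pre-change law excludes the
   event that all statistics S_n of the window stay below h. These events are decreasing in the
   independent log-likelihood ratios, so by Harris' inequality the event has probability at
   least P(S_m < h)^m_alpha; the S_n are stationary under the pre-change law, and S_m has no
   atoms because F0 maps onto (0,1), so this is F0(h)^m_alpha = 1 - alpha at h = h(alpha).
   Missed detection: {T >= v} depends only on the observations before v, while {T >= v + m}
   also forces S_(v+m-1) < h, an event depending only on the m post-change observations and of
   probability beta(h); independence bounds the conditional probability by beta(h). A threshold
   with false-alarm probability exactly alpha cannot exceed h(alpha) because F0 is strictly
   increasing, and beta is increasing in h. *)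

lemma ennreal_rearrangement:
  fixes a b c d :: ennreal
  assumes "a \<le> b" "c \<le> d"
  shows "a * d + b * c \<le> a * c + b * d"
proof -
  obtain p where p: "b = a + p" using assms(1) le_iff_add by blast
  obtain q where q: "d = c + q" using assms(2) le_iff_add by blast
  show ?thesis unfolding p q by (simp add: algebra_simps)
qed

lemma (in prob_space) nn_integral_mult_ge_comonotone:
  fixes f g :: "'a \<Rightarrow> ennreal" and w :: "'a \<Rightarrow> 'b::linorder"
  assumes [measurable]: "f \<in> borel_measurable M" "g \<in> borel_measurable M"
    and mono_f: "\<And>x y. w x \<le> w y \<Longrightarrow> f x \<le> f y"
    and mono_g: "\<And>x y. w x \<le> w y \<Longrightarrow> g x \<le> g y"
  shows "(\<integral>\<^sup>+x. f x \<partial>M) * (\<integral>\<^sup>+x. g x \<partial>M) \<le> (\<integral>\<^sup>+x. f x * g x \<partial>M)"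
proof -
  define F G H where "F = (\<integral>\<^sup>+x. f x \<partial>M)" and "G = (\<integral>\<^sup>+x. g x \<partial>M)"
    and "H = (\<integral>\<^sup>+x. f x * g x \<partial>M)"
  have rearr: "f a * g b + f b * g a \<le> f a * g a + f b * g b" for a b
  proof (cases "w a \<le> w b")
    case True
    then show ?thesis using ennreal_rearrangement[OF mono_f mono_g] by simp
  next
    case False
    then show ?thesis using ennreal_rearrangement[OF mono_f mono_g, of b a] by (simp add: add_ac)
  qed
  have "g b * F + f b * G \<le> H + f b * g b" for b
  proof -
    have "g b * F + f b * G = (\<integral>\<^sup>+a. f a * g b + f b * g a \<partial>M)"
      unfolding F_def G_def
      by (simp add: nn_integral_add nn_integral_cmult nn_integral_multc mult.commute)
    also have "\<dots> \<le> (\<integral>\<^sup>+a. f a * g a + f b * g b \<partial>M)" by (intro nn_integral_mono rearr)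
    also have "\<dots> = H + f b * g b" unfolding H_def by (simp add: nn_integral_add emeasure_space_1)
    finally show ?thesis .
  qed
  then have "(\<integral>\<^sup>+b. g b * F + f b * G \<partial>M) \<le> (\<integral>\<^sup>+b. H + f b * g b \<partial>M)"
    by (intro nn_integral_mono)
  then have "F * G + F * G \<le> H + H"
    unfolding F_def G_def H_def
    by (simp add: nn_integral_add nn_integral_cmult nn_integral_multc emeasure_space_1 mult.commute)
  then show ?thesis unfolding F_def G_def H_def by (meson add_strict_mono leD le_less_linear)
qed

text \<open>Harris' inequality for product measures, by induction on the number of factors with the
  previous lemma in the inserted coordinate.\<close>

lemma nn_integral_PiM_mult_ge_comonotone:
  fixes M :: "'i \<Rightarrow> 'a measure" and w :: "'i \<Rightarrow> 'a \<Rightarrow> 'b::linorder"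
    and f g :: "('i \<Rightarrow> 'a) \<Rightarrow> ennreal"
  assumes M: "\<And>i. prob_space (M i)" and "finite J"
    and "f \<in> borel_measurable (PiM J M)" "g \<in> borel_measurable (PiM J M)"
    and "\<And>x y. (\<forall>i\<in>J. w i (x i) \<le> w i (y i)) \<Longrightarrow> f x \<le> f y"
    and "\<And>x y. (\<forall>i\<in>J. w i (x i) \<le> w i (y i)) \<Longrightarrow> g x \<le> g y"
  shows "(\<integral>\<^sup>+x. f x \<partial>PiM J M) * (\<integral>\<^sup>+x. g x \<partial>PiM J M) \<le> (\<integral>\<^sup>+x. f x * g x \<partial>PiM J M)"
  using assms(2-)
proof (induction J arbitrary: f g rule: finite_induct)
  case empty
  show ?case by (simp add: PiM_empty nn_integral_count_space_finite)
next
  case (insert i J)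
  interpret product_prob_space M by (intro product_prob_spaceI M)
  note [measurable] = insert.prems(1,2)
  define F where "F y = (\<integral>\<^sup>+z. f (y(i:=z)) \<partial>M i)" for y
  define G where "G y = (\<integral>\<^sup>+z. g (y(i:=z)) \<partial>M i)" for y
  have [measurable]: "F \<in> borel_measurable (PiM J M)" "G \<in> borel_measurable (PiM J M)"
    unfolding F_def G_def by measurable
  have upd: "\<forall>j\<in>insert i J. w j ((x(i:=z)) j) \<le> w j ((y(i:=z')) j)"
    if "\<forall>j\<in>J. w j (x j) \<le> w j (y j)" "w i z \<le> w i z'" for x y z z'
    using that insert.hyps(2) by auto
  have "(\<integral>\<^sup>+x. F x \<partial>PiM J M) * (\<integral>\<^sup>+x. G x \<partial>PiM J M) \<le> (\<integral>\<^sup>+x. F x * G x \<partial>PiM J M)"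
    by (rule insert.IH) (auto simp: F_def G_def intro!: nn_integral_mono insert.prems(3,4) upd)
  also have "\<dots> \<le> (\<integral>\<^sup>+y. (\<integral>\<^sup>+z. f (y(i:=z)) * g (y(i:=z)) \<partial>M i) \<partial>PiM J M)"
  proof (intro nn_integral_mono)
    fix y assume y: "y \<in> space (PiM J M)"
    have "(\<lambda>z. y(i := z)) \<in> measurable (M i) (PiM (insert i J) M)"
      by (rule measurable_component_update[OF y insert.hyps(2)])
    then have "(\<lambda>z. f (y(i:=z))) \<in> borel_measurable (M i)" "(\<lambda>z. g (y(i:=z))) \<in> borel_measurable (M i)"
      by (simp_all add: measurable_compose)
    then show "F y * G y \<le> (\<integral>\<^sup>+z. f (y(i:=z)) * g (y(i:=z)) \<partial>M i)"
      unfolding F_def G_def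
      by (rule prob_space.nn_integral_mult_ge_comonotone[OF M, where w="w i"])
        (auto intro!: insert.prems(3,4) upd)
  qed
  also have "\<dots> = (\<integral>\<^sup>+x. f x * g x \<partial>PiM (insert i J) M)"
    by (rule product_nn_integral_insert[symmetric]) (use insert.hyps in auto)
  finally show ?case
    using product_nn_integral_insert[of J i f] product_nn_integral_insert[of J i g] insert.hyps
    by (simp add: F_def G_def)
qed

lemma emeasure_PiM_Int_ge_mult_increasing:
  fixes M :: "'i \<Rightarrow> 'a measure" and w :: "'i \<Rightarrow> 'a \<Rightarrow> 'b::linorder"
  assumes M: "\<And>i. prob_space (M i)" and J: "finite J"
    and P: "{x\<in>space (PiM J M). P x} \<in> sets (PiM J M)"
    and Q: "{x\<in>space (PiM J M). Q x} \<in> sets (PiM J M)"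
    and mono_P: "\<And>x y. (\<forall>i\<in>J. w i (x i) \<le> w i (y i)) \<Longrightarrow> P x \<Longrightarrow> P y"
    and mono_Q: "\<And>x y. (\<forall>i\<in>J. w i (x i) \<le> w i (y i)) \<Longrightarrow> Q x \<Longrightarrow> Q y"
  shows "emeasure (PiM J M) {x\<in>space (PiM J M). P x} * emeasure (PiM J M) {x\<in>space (PiM J M). Q x}
    \<le> emeasure (PiM J M) {x\<in>space (PiM J M). P x \<and> Q x}"
proof -
  let ?S = "space (PiM J M)"
  have emeasure_eq: "emeasure (PiM J M) {x\<in>?S. R x} = (\<integral>\<^sup>+x. indicator {x. R x} x \<partial>PiM J M)"
    and indicator_measurable: "(\<lambda>x. indicator {x. R x} x :: ennreal) \<in> borel_measurable (PiM J M)"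
    if "{x\<in>?S. R x} \<in> sets (PiM J M)" for R
  proof -
    have ind: "indicator {x\<in>?S. R x} x = (indicator {x. R x} x :: ennreal)" if "x \<in> ?S" for x
      using that by (simp split: split_indicator)
    have "emeasure (PiM J M) {x\<in>?S. R x} = (\<integral>\<^sup>+x. indicator {x\<in>?S. R x} x \<partial>PiM J M)"
      using that by simp
    also have "\<dots> = (\<integral>\<^sup>+x. indicator {x. R x} x \<partial>PiM J M)"
      by (intro nn_integral_cong ind)
    finally show "emeasure (PiM J M) {x\<in>?S. R x} = (\<integral>\<^sup>+x. indicator {x. R x} x \<partial>PiM J M)" .
    have "(\<lambda>x. indicator {x\<in>?S. R x} x :: ennreal) \<in> borel_measurable (PiM J M)"
      using that by simp
    then show "(\<lambda>x. indicator {x. R x} x :: ennreal) \<in> borel_measurable (PiM J M)"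
      by (rule measurable_cong[THEN iffD1, rotated]) (rule ind)
  qed
  have PQ: "{x\<in>?S. P x \<and> Q x} \<in> sets (PiM J M)"
    using Q P by (rule sets.sets_Collect_conj)
  have "(\<integral>\<^sup>+x. indicator {x. P x} x \<partial>PiM J M) * (\<integral>\<^sup>+x. indicator {x. Q x} x \<partial>PiM J M)
      \<le> (\<integral>\<^sup>+x. indicator {x. P x} x * indicator {x. Q x} x \<partial>PiM J M)"
    by (rule nn_integral_PiM_mult_ge_comonotone[OF M J indicator_measurable[OF P]
          indicator_measurable[OF Q]])
      (auto split: split_indicator dest: mono_P mono_Q)
  also have "\<dots> = (\<integral>\<^sup>+x. indicator {x. P x \<and> Q x} x \<partial>PiM J M)"
    by (intro nn_integral_cong) (auto split: split_indicator)
  finally show ?thesis by (simp only: emeasure_eq[OF P] emeasure_eq[OF Q] emeasure_eq[OF PQ])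
qed

lemma emeasure_PiM_Ball_ge_prod_increasing:
  fixes M :: "'i \<Rightarrow> 'a measure" and w :: "'i \<Rightarrow> 'a \<Rightarrow> 'b::linorder"
    and P :: "'k \<Rightarrow> ('i \<Rightarrow> 'a) \<Rightarrow> bool"
  assumes M: "\<And>i. prob_space (M i)" and J: "finite J" and "finite K"
    and "\<And>k. k \<in> K \<Longrightarrow> {x\<in>space (PiM J M). P k x} \<in> sets (PiM J M)"
    and "\<And>k x y. k \<in> K \<Longrightarrow> (\<forall>i\<in>J. w i (x i) \<le> w i (y i)) \<Longrightarrow> P k x \<Longrightarrow> P k y"
  shows "(\<Prod>k\<in>K. emeasure (PiM J M) {x\<in>space (PiM J M). P k x})
    \<le> emeasure (PiM J M) {x\<in>space (PiM J M). \<forall>k\<in>K. P k x}"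
  using assms(3-)
proof (induction K rule: finite_induct)
  case empty
  interpret prob_space "PiM J M" by (intro prob_space_PiM M)
  show ?case by (simp add: emeasure_space_1)
next
  case (insert k K)
  have K_sets: "{x\<in>space (PiM J M). \<forall>k\<in>K. P k x} \<in> sets (PiM J M)"
    by (rule sets.sets_Collect_finite_All) (use insert in auto)
  have "(\<Prod>k\<in>insert k K. emeasure (PiM J M) {x\<in>space (PiM J M). P k x})
     \<le> emeasure (PiM J M) {x\<in>space (PiM J M). P k x}
       * emeasure (PiM J M) {x\<in>space (PiM J M). \<forall>k\<in>K. P k x}"
    using insert by (auto intro: mult_left_mono)
  also have "\<dots> \<le> emeasure (PiM J M) {x\<in>space (PiM J M). P k x \<and> (\<forall>k\<in>K. P k x)}"
    by (rule emeasure_PiM_Int_ge_mult_increasing[OF M J insert.prems(1) K_sets, where w=w])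
      (use insert.prems in blast)+
  finally show ?case by simp
qed

lemma emeasure_PiM_UNIV_eq_PiM_finite:
  fixes M :: "'i \<Rightarrow> 'a measure"
  assumes M: "\<And>i. prob_space (M i)" and J: "finite J"
    and depends: "\<And>x. P (restrict x J) = P x"
    and P_sets: "{y\<in>space (PiM J M). P y} \<in> sets (PiM J M)"
  shows "emeasure (PiM UNIV M) {x\<in>space (PiM UNIV M). P x}
    = emeasure (PiM J M) {y\<in>space (PiM J M). P y}"
proof -
  interpret product_prob_space M UNIV by (intro product_prob_spaceI M)
  have "{x\<in>space (PiM UNIV M). P x} = prod_emb UNIV M J {y\<in>space (PiM J M). P y}"
    unfolding prod_emb_def using depends by (auto simp: space_PiM PiE_iff)
  then show ?thesis using emeasure_PiM_emb'[OF subset_UNIV J P_sets] by simp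
qed

lemma emeasure_PiM_shift:
  fixes M :: "nat \<Rightarrow> 'a measure"
  assumes M: "\<And>i. prob_space (M i)"
    and P_sets: "{y\<in>space (PiM UNIV (\<lambda>i. M (i + k))). P y} \<in> sets (PiM UNIV (\<lambda>i. M (i + k)))"
  shows "emeasure (PiM UNIV M) {x\<in>space (PiM UNIV M). P (\<lambda>i. x (i + k))}
     = emeasure (PiM UNIV (\<lambda>i. M (i + k))) {y\<in>space (PiM UNIV (\<lambda>i. M (i + k))). P y}"
proof -
  let ?shift = "\<lambda>x. \<lambda>i\<in>UNIV. x (i + k)"
  have shift_measurable: "?shift \<in> measurable (PiM UNIV M) (PiM UNIV (\<lambda>i. M (i + k)))"
    by (intro measurable_restrict measurable_component_singleton) auto
  have "emeasure (PiM UNIV (\<lambda>i. M (i + k))) {y\<in>space (PiM UNIV (\<lambda>i. M (i + k))). P y}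
      = emeasure (distr (PiM UNIV M) (PiM UNIV (\<lambda>i. M (i + k))) ?shift)
          {y\<in>space (PiM UNIV (\<lambda>i. M (i + k))). P y}"
    by (subst distr_PiM_reindex) (auto simp: M inj_on_def)
  also have "\<dots> = emeasure (PiM UNIV M)
      (?shift -` {y\<in>space (PiM UNIV (\<lambda>i. M (i + k))). P y} \<inter> space (PiM UNIV M))"
    by (rule emeasure_distr[OF shift_measurable P_sets])
  also have "?shift -` {y\<in>space (PiM UNIV (\<lambda>i. M (i + k))). P y} \<inter> space (PiM UNIV M)
      = {x\<in>space (PiM UNIV M). P (\<lambda>i. x (i + k))}"
    using measurable_space[OF shift_measurable] by (auto simp: restrict_def)
  finally show ?thesis ..
qed

lemma emeasure_PiM_conj_eq_mult_disjoint:
  fixes M :: "'i \<Rightarrow> 'a measure"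
  assumes M: "\<And>i. prob_space (M i)" and I: "finite I" and J: "finite J" and IJ: "I \<inter> J = {}"
    and depends_P: "\<And>x. P (restrict x I) = P x" and depends_Q: "\<And>x. Q (restrict x J) = Q x"
    and P_sets: "{y\<in>space (PiM I M). P y} \<in> sets (PiM I M)"
    and Q_sets: "{y\<in>space (PiM J M). Q y} \<in> sets (PiM J M)"
    and PQ_sets: "{y\<in>space (PiM (I \<union> J) M). P y \<and> Q y} \<in> sets (PiM (I \<union> J) M)"
  shows "emeasure (PiM UNIV M) {x\<in>space (PiM UNIV M). P x \<and> Q x}
    = emeasure (PiM UNIV M) {x\<in>space (PiM UNIV M). P x} * emeasure (PiM UNIV M) {x\<in>space (PiM UNIV M). Q x}"
proof -
  interpret product_prob_space M UNIV by (rule product_prob_spaceI[OF M])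
  have "P (restrict x (I \<union> J)) = P x" "Q (restrict x (I \<union> J)) = Q x" for x
    using depends_P[of "restrict x (I \<union> J)"] depends_P[of x]
      depends_Q[of "restrict x (I \<union> J)"] depends_Q[of x]
    by (simp_all add: Int_absorb1)
  then have "emeasure (PiM UNIV M) {x\<in>space (PiM UNIV M). P x \<and> Q x}
     = emeasure (PiM (I \<union> J) M) {y\<in>space (PiM (I \<union> J) M). P y \<and> Q y}"
    by (intro emeasure_PiM_UNIV_eq_PiM_finite M PQ_sets) (use I J in auto)
  also have "\<dots> = (\<integral>\<^sup>+x. emeasure (PiM J M) ((\<lambda>y. merge I J (x, y)) -`
      {y\<in>space (PiM (I \<union> J) M). P y \<and> Q y} \<inter> space (PiM J M)) \<partial>PiM I M)"
    by (rule emeasure_fold_integral[OF IJ I J PQ_sets])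
  also have "\<dots> = (\<integral>\<^sup>+x. emeasure (PiM J M) {y\<in>space (PiM J M). Q y}
      * indicator {y\<in>space (PiM I M). P y} x \<partial>PiM I M)"
  proof (intro nn_integral_cong)
    fix x assume x: "x \<in> space (PiM I M)"
    have "merge I J (x, y) \<in> space (PiM (I \<union> J) M)" if "y \<in> space (PiM J M)" for y
      using measurable_space[OF measurable_merge[of I J M], of "(x, y)"] x that
      by (simp add: space_pair_measure)
    moreover have "P (merge I J (x, y)) = P x" "Q (merge I J (x, y)) = Q y" for y
      using depends_P[of "merge I J (x, y)"] depends_P[of x]
        depends_Q[of "merge I J (x, y)"] depends_Q[of y] IJ
      by simp_all
    ultimately have "(\<lambda>y. merge I J (x, y)) -` {y\<in>space (PiM (I \<union> J) M). P y \<and> Q y} \<inter> space (PiM J M)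
        = (if P x then {y\<in>space (PiM J M). Q y} else {})"
      by auto
    then show "emeasure (PiM J M) ((\<lambda>y. merge I J (x, y)) -`
        {y\<in>space (PiM (I \<union> J) M). P y \<and> Q y} \<inter> space (PiM J M))
      = emeasure (PiM J M) {y\<in>space (PiM J M). Q y} * indicator {y\<in>space (PiM I M). P y} x"
      using x by (auto split: split_indicator)
  qed
  also have "\<dots> = emeasure (PiM J M) {y\<in>space (PiM J M). Q y}
      * emeasure (PiM I M) {y\<in>space (PiM I M). P y}"
    using P_sets by (simp add: nn_integral_cmult)
  finally show ?thesis
    using emeasure_PiM_UNIV_eq_PiM_finite[OF M I depends_P P_sets]
      emeasure_PiM_UNIV_eq_PiM_finite[OF M J depends_Q Q_sets]
    by (simp add: mult.commute)
qed

lemma null_sets_PiM_insert_iff_AE_section: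
  fixes M :: "'i \<Rightarrow> 'a measure"
  assumes M: "\<And>i. prob_space (M i)" and "finite J" "i \<notin> J"
    and A: "A \<in> sets (PiM (insert i J) M)"
  shows "A \<in> null_sets (PiM (insert i J) M)
    \<longleftrightarrow> (AE y in PiM J M. (\<lambda>z. y(i := z)) -` A \<inter> space (M i) \<in> null_sets (M i))"
proof -
  interpret product_prob_space M UNIV by (rule product_prob_spaceI[OF M])
  have [measurable]: "(indicator A :: _ \<Rightarrow> ennreal) \<in> borel_measurable (PiM (insert i J) M)"
    using A by simp
  define slice where "slice y = (\<integral>\<^sup>+z. indicator A (y(i := z)) \<partial>M i)" for y
  have [measurable]: "slice \<in> borel_measurable (PiM J M)"
    unfolding slice_def by measurable
  have slice_eq: "slice y = emeasure (M i) ((\<lambda>z. y(i := z)) -` A \<inter> space (M i))"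
    and slice_sets: "(\<lambda>z. y(i := z)) -` A \<inter> space (M i) \<in> sets (M i)"
    if "y \<in> space (PiM J M)" for y
  proof -
    show sets: "(\<lambda>z. y(i := z)) -` A \<inter> space (M i) \<in> sets (M i)"
      using measurable_sets[OF measurable_component_update[OF that assms(3)] A] .
    have "slice y = (\<integral>\<^sup>+z. indicator ((\<lambda>z. y(i := z)) -` A \<inter> space (M i)) z \<partial>M i)"
      unfolding slice_def by (intro nn_integral_cong) (simp split: split_indicator)
    then show "slice y = emeasure (M i) ((\<lambda>z. y(i := z)) -` A \<inter> space (M i))"
      using sets by simp
  qed
  have "emeasure (PiM (insert i J) M) A = (\<integral>\<^sup>+y. slice y \<partial>PiM J M)"
    using A assms(2,3) unfolding slice_def
    by (simp add: product_nn_integral_insert flip: nn_integral_indicator)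
  then have "A \<in> null_sets (PiM (insert i J) M) \<longleftrightarrow> (AE y in PiM J M. slice y = 0)"
    using A by (simp add: null_sets_def nn_integral_0_iff_AE)
  also have "\<dots> \<longleftrightarrow> (AE y in PiM J M. (\<lambda>z. y(i := z)) -` A \<inter> space (M i) \<in> null_sets (M i))"
    by (intro AE_cong) (simp add: slice_eq slice_sets null_sets_def)
  finally show ?thesis .
qed

lemma absolutely_continuous_PiM:
  fixes M N :: "'i \<Rightarrow> 'a measure"
  assumes M: "\<And>i. prob_space (M i)" and N: "\<And>i. prob_space (N i)"
    and sets_eq: "\<And>i. sets (M i) = sets (N i)" and "finite J"
    and "\<And>i. i \<in> J \<Longrightarrow> absolutely_continuous (M i) (N i)"
  shows "absolutely_continuous (PiM J M) (PiM J N)"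
  using assms(4,5)
proof (induction J rule: finite_induct)
  case empty
  then show ?case by (simp add: PiM_empty absolutely_continuous_def)
next
  case (insert i J)
  have PiM_sets_eq: "sets (PiM K M) = sets (PiM K N)" for K
    by (rule sets_PiM_cong) (auto simp: sets_eq)
  have space_eq: "space (M i) = space (N i)" by (rule sets_eq_imp_space_eq[OF sets_eq])
  show ?case
    unfolding absolutely_continuous_def
  proof
    fix A assume A_null: "A \<in> null_sets (PiM (insert i J) M)"
    then have A: "A \<in> sets (PiM (insert i J) M)" "A \<in> sets (PiM (insert i J) N)"
      using PiM_sets_eq by auto
    have "AE y in PiM J M. (\<lambda>z. y(i := z)) -` A \<inter> space (M i) \<in> null_sets (M i)"
      using A_null null_sets_PiM_insert_iff_AE_section[OF M insert.hyps A(1)] by simp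
    then have "AE y in PiM J N. (\<lambda>z. y(i := z)) -` A \<inter> space (M i) \<in> null_sets (M i)"
      using insert.IH insert.prems by (intro absolutely_continuous_AE[OF PiM_sets_eq[symmetric]]) auto
    then have "AE y in PiM J N. (\<lambda>z. y(i := z)) -` A \<inter> space (N i) \<in> null_sets (N i)"
      using insert.prems[of i] space_eq by (auto simp: absolutely_continuous_def)
    then show "A \<in> null_sets (PiM (insert i J) N)"
      using null_sets_PiM_insert_iff_AE_section[OF N insert.hyps A(2)] by simp
  qed
qed

lemma absolutely_continuous_density_density:
  fixes f g :: "'a \<Rightarrow> ennreal"
  assumes [measurable]: "f \<in> borel_measurable M" "g \<in> borel_measurable M"
    and "AE x in density M g. 0 < f x"
  shows "absolutely_continuous (density M f) (density M g)"
proof -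
  have g_pos: "AE x in M. 0 < g x \<longrightarrow> 0 < f x" using assms(3) by (simp add: AE_density)
  show ?thesis
    unfolding absolutely_continuous_def
  proof
    fix B assume "B \<in> null_sets (density M f)"
    then have "B \<in> sets M" "AE x in M. x \<in> B \<longrightarrow> f x = 0" by (simp_all add: null_sets_density_iff)
    moreover from this(2) g_pos have "AE x in M. x \<in> B \<longrightarrow> g x = 0"
      by eventually_elim (auto simp: zero_less_iff_neq_zero)
    ultimately show "B \<in> null_sets (density M g)" by (simp add: null_sets_density_iff)
  qed
qed

lemma (in prob_space) prob_less_eq_prob_le_if_cdf_onto:
  fixes X :: "'a \<Rightarrow> real"
  assumes [measurable]: "X \<in> borel_measurable M"
    and onto: "{0<..<1} \<subseteq> range (\<lambda>t. prob {x\<in>space M. X x \<le> t})"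
  shows "prob {x\<in>space M. X x < h} = prob {x\<in>space M. X x \<le> h}"
proof -
  let ?F = "\<lambda>t. prob {x\<in>space M. X x \<le> t}" and ?G = "prob {x\<in>space M. X x < h}"
  have G_le: "?G \<le> ?F h" by (intro finite_measure_mono) auto
  have le_G: "?F t \<le> ?G" if "t < h" for t
    using that by (intro finite_measure_mono) auto
  have F_mono: "?F s \<le> ?F t" if "s \<le> t" for s t
    using that by (intro finite_measure_mono) auto
  have "\<not> ?G < ?F h"
  proof
    assume less: "?G < ?F h"
    have "0 \<le> ?G" "?F h \<le> 1" by simp_all
    with less have "0 < ?G + ?F h" "?G + ?F h < 2" by linarith+
    then have "(?G + ?F h) / 2 \<in> {0<..<1}" by simp
    then have "(?G + ?F h) / 2 \<in> range ?F" using onto by blast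
    then obtain t where t: "?F t = (?G + ?F h) / 2" by (elim rangeE) simp
    show False
    proof (cases "h \<le> t")
      case True
      then show False using F_mono[of h t] t less by simp
    next
      case False
      then show False using le_G[of t] t less by simp
    qed
  qed
  then show ?thesis using G_le by simp
qed

definition obs_measure :: "(real \<Rightarrow> real) \<Rightarrow> (real \<Rightarrow> real) \<Rightarrow> nat \<Rightarrow> enat \<Rightarrow> nat \<Rightarrow> real measure" where
  "obs_measure f0 f1 m v n = density lborel (\<lambda>t. ennreal (obs_density f0 f1 m v n t))"

lemma P_cp_eq_PiM: "P_cp f0 f1 m v = PiM UNIV (obs_measure f0 f1 m v)"
  unfolding P_cp_def obs_measure_def[abs_def] ..

lemma S_stat_restrict:
  assumes "{n + 1 - m..n} \<subseteq> K"
  shows "S_stat f0 f1 m n (restrict x K) = S_stat f0 f1 m n x"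
  unfolding S_stat_def using assms by (intro sum.cong) auto

lemma S_stat_shift: "S_stat f0 f1 m m (\<lambda>i. x (i + k)) = S_stat f0 f1 m (m + k) x"
proof -
  have "S_stat f0 f1 m (m + k) x = (\<Sum>i = 1 + k..m + k. llr f0 f1 (x i))"
    unfolding S_stat_def by (simp add: add.commute)
  also have "\<dots> = (\<Sum>i = 1..m. llr f0 f1 (x (i + k)))"
    by (rule sum.shift_bounds_cl_nat_ivl)
  finally show ?thesis unfolding S_stat_def by simp
qed

lemma T_FMA_ge_iff: "enat v \<le> T_FMA f0 f1 m h x \<longleftrightarrow> (\<forall>n\<in>{m..<v}. S_stat f0 f1 m n x < h)"
proof -
  have "enat v \<le> T_FMA f0 f1 m h x \<longleftrightarrow> (\<forall>n. m \<le> n \<and> h \<le> S_stat f0 f1 m n x \<longrightarrow> v \<le> n)"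
    unfolding T_FMA_def by (auto simp: le_Inf_iff)
  also have "\<dots> \<longleftrightarrow> (\<forall>n\<in>{m..<v}. S_stat f0 f1 m n x < h)"
    by (meson atLeastLessThan_iff not_le)
  finally show ?thesis .
qed

lemma T_FMA_less_iff: "T_FMA f0 f1 m h x < enat k \<longleftrightarrow> (\<exists>n. m \<le> n \<and> h \<le> S_stat f0 f1 m n x \<and> n < k)"
  unfolding T_FMA_def by (auto simp: Inf_less_iff)

locale change_point =
  fixes f0 f1 :: "real \<Rightarrow> real" and m :: nat
  assumes m_pos: "1 \<le> m"
    and f0_measurable[measurable]: "f0 \<in> borel_measurable borel"
    and f1_measurable[measurable]: "f1 \<in> borel_measurable borel"
    and prob_space_f0: "prob_space (density lborel (\<lambda>t. ennreal (f0 t)))"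
    and prob_space_f1: "prob_space (density lborel (\<lambda>t. ennreal (f1 t)))"
    and f0_pos_AE_f1: "AE t in density lborel (\<lambda>t. ennreal (f1 t)). 0 < f0 t"
begin

abbreviation "Obs \<equiv> obs_measure f0 f1 m"
abbreviation "S \<equiv> S_stat f0 f1 m"

lemma obs_measure_eq: "Obs v n = (if v \<le> enat n \<and> enat n < v + enat m
    then density lborel (\<lambda>t. ennreal (f1 t)) else density lborel (\<lambda>t. ennreal (f0 t)))"
  unfolding obs_measure_def obs_density_def by auto

lemma prob_space_obs_measure: "prob_space (Obs v n)"
  using prob_space_f0 prob_space_f1 by (simp add: obs_measure_eq)

lemma sets_obs_measure: "sets (Obs v n) = sets borel"
  by (simp add: obs_measure_eq)

lemma prob_space_PiM_obs_measure: "prob_space (PiM K (Obs v))"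
  by (intro prob_space_PiM prob_space_obs_measure)

lemma S_stat_measurable:
  assumes "{n + 1 - m..n} \<subseteq> K"
  shows "S n \<in> borel_measurable (PiM K (Obs v))"
  unfolding S_stat_def[abs_def] llr_def
proof (intro borel_measurable_sum)
  fix i assume "i \<in> {n + 1 - m..n}"
  then have "(\<lambda>x. x i) \<in> measurable (PiM K (Obs v)) (Obs v i)"
    using assms by (intro measurable_component_singleton) auto
  then have "(\<lambda>x. x i) \<in> borel_measurable (PiM K (Obs v))"
    by (simp add: measurable_cong_sets[OF refl sets_obs_measure])
  then show "(\<lambda>x. ln (f1 (x i) / f0 (x i))) \<in> borel_measurable (PiM K (Obs v))"
    by measurable
qed

lemma S_stat_level_sets:
  assumes "{n + 1 - m..n} \<subseteq> K"
  shows "{x\<in>space (PiM K (Obs v)). S n x < h} \<in> sets (PiM K (Obs v))"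
    "{x\<in>space (PiM K (Obs v)). S n x \<le> h} \<in> sets (PiM K (Obs v))"
    "{x\<in>space (PiM K (Obs v)). S n x = h} \<in> sets (PiM K (Obs v))"
  using S_stat_measurable[OF assms, of v] by measurable

lemma no_alarm_sets:
  assumes "finite W" "\<And>n. n \<in> W \<Longrightarrow> {n + 1 - m..n} \<subseteq> K"
  shows "{x\<in>space (PiM K (Obs v)). \<forall>n\<in>W. S n x < h} \<in> sets (PiM K (Obs v))"
  using assms by (intro sets.sets_Collect_finite_All S_stat_level_sets(1))

lemma prob_S_stat_less_shift:
  assumes "\<And>i. Obs v (i + k) = Obs v' i"
  shows "measure (P_cp f0 f1 m v) {x\<in>space (P_cp f0 f1 m v). S (m + k) x < h}
       = measure (P_cp f0 f1 m v') {x\<in>space (P_cp f0 f1 m v'). S m x < h}"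
proof -
  have "(\<lambda>i. Obs v (i + k)) = Obs v'" using assms by auto
  then have "emeasure (PiM UNIV (Obs v)) {x\<in>space (PiM UNIV (Obs v)). S m (\<lambda>i. x (i + k)) < h}
       = emeasure (PiM UNIV (Obs v')) {y\<in>space (PiM UNIV (Obs v')). S m y < h}"
    using emeasure_PiM_shift[where M="Obs v" and k=k and P="\<lambda>y. S m y < h", OF prob_space_obs_measure]
      S_stat_level_sets(1)[of m UNIV v' h] by simp
  then show ?thesis unfolding P_cp_eq_PiM S_stat_shift measure_def by simp
qed

lemma prob_S_stat_less_stationary:
  assumes "m \<le> n"
  shows "measure (P_cp f0 f1 m \<infinity>) {x\<in>space (P_cp f0 f1 m \<infinity>). S n x < h}
       = measure (P_cp f0 f1 m \<infinity>) {x\<in>space (P_cp f0 f1 m \<infinity>). S m x < h}"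
  using prob_S_stat_less_shift[of \<infinity> "n - m" \<infinity> h] assms by (simp add: obs_measure_eq)

text \<open>The events {S n < h} are decreasing in every log-likelihood ratio, so by Harris'
  inequality they are positively correlated under the pre-change law.\<close>

lemma prob_no_alarm_ge_power:
  assumes W: "finite W" "W \<subseteq> {m..}"
  shows "measure (P_cp f0 f1 m \<infinity>) {x\<in>space (P_cp f0 f1 m \<infinity>). S m x < h} ^ card W
       \<le> measure (P_cp f0 f1 m \<infinity>) {x\<in>space (P_cp f0 f1 m \<infinity>). \<forall>n\<in>W. S n x < h}"
proof -
  let ?P = "PiM UNIV (Obs \<infinity>)"
  interpret prob_space ?P by (rule prob_space_PiM_obs_measure)
  define J where "J = (\<Union>n\<in>W. {n + 1 - m..n})"
  have J: "finite J" "\<And>n. n \<in> W \<Longrightarrow> {n + 1 - m..n} \<subseteq> J" using W by (auto simp: J_def)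
  have window_sets: "{x\<in>space (PiM J (Obs \<infinity>)). S n x < h} \<in> sets (PiM J (Obs \<infinity>))"
    if "n \<in> W" for n using that J by (intro S_stat_level_sets(1)) auto
  have window_eq: "emeasure (PiM J (Obs \<infinity>)) {x\<in>space (PiM J (Obs \<infinity>)). S n x < h}
      = measure (P_cp f0 f1 m \<infinity>) {x\<in>space (P_cp f0 f1 m \<infinity>). S m x < h}" if n: "n \<in> W" for n
  proof -
    have "emeasure (PiM J (Obs \<infinity>)) {x\<in>space (PiM J (Obs \<infinity>)). S n x < h}
        = emeasure ?P {x\<in>space ?P. S n x < h}"
      by (rule emeasure_PiM_UNIV_eq_PiM_finite[symmetric, OF prob_space_obs_measure J(1) _
            window_sets[OF n]]) (use S_stat_restrict J(2)[OF n] in auto)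
    also have "\<dots> = measure (P_cp f0 f1 m \<infinity>) {x\<in>space (P_cp f0 f1 m \<infinity>). S m x < h}"
      using prob_S_stat_less_stationary[of n h] n W by (auto simp: P_cp_eq_PiM emeasure_eq_measure)
    finally show ?thesis .
  qed
  have "ennreal (measure (P_cp f0 f1 m \<infinity>) {x\<in>space (P_cp f0 f1 m \<infinity>). S m x < h} ^ card W)
      = (\<Prod>n\<in>W. emeasure (PiM J (Obs \<infinity>)) {x\<in>space (PiM J (Obs \<infinity>)). S n x < h})"
    by (simp add: window_eq prod_ennreal ennreal_power)
  also have "\<dots> \<le> emeasure (PiM J (Obs \<infinity>)) {x\<in>space (PiM J (Obs \<infinity>)). \<forall>n\<in>W. S n x < h}"
  proof (rule emeasure_PiM_Ball_ge_prod_increasing[OF prob_space_obs_measure J(1) W(1) window_sets,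
        where w="\<lambda>i t. - llr f0 f1 t"])
    fix n x y assume n: "n \<in> W" and "\<forall>i\<in>J. - llr f0 f1 (x i) \<le> - llr f0 f1 (y i)"
    then have "S n y \<le> S n x" unfolding S_stat_def using J(2)[OF n] by (intro sum_mono) auto
    then show "S n x < h \<Longrightarrow> S n y < h" by simp
  qed
  also have "\<dots> = emeasure ?P {x\<in>space ?P. \<forall>n\<in>W. S n x < h}"
    by (rule emeasure_PiM_UNIV_eq_PiM_finite[symmetric, OF prob_space_obs_measure J(1) _
          no_alarm_sets[OF W(1) J(2)]]) (use S_stat_restrict J(2) in auto)
  finally show ?thesis by (simp add: P_cp_eq_PiM emeasure_eq_measure)
qed

lemma prob_false_alarm_window_le:
  "measure (P_cp f0 f1 m \<infinity>) {x\<in>space (P_cp f0 f1 m \<infinity>).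
      enat l \<le> T_FMA f0 f1 m h x \<and> T_FMA f0 f1 m h x < enat (l + ma)}
    \<le> 1 - measure (P_cp f0 f1 m \<infinity>) {x\<in>space (P_cp f0 f1 m \<infinity>). S m x < h} ^ ma"
proof -
  let ?P = "P_cp f0 f1 m \<infinity>" and ?T = "T_FMA f0 f1 m h"
  interpret prob_space ?P unfolding P_cp_eq_PiM by (rule prob_space_PiM_obs_measure)
  define W where "W = {max l m..<l + ma}"
  define no_alarm where "no_alarm = {x\<in>space ?P. \<forall>n\<in>W. S n x < h}"
  have no_alarm_sets: "no_alarm \<in> sets ?P"
    unfolding no_alarm_def P_cp_eq_PiM by (rule no_alarm_sets) (auto simp: W_def)
  have "{x\<in>space ?P. enat l \<le> ?T x \<and> ?T x < enat (l + ma)} \<subseteq> space ?P - no_alarm"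
  proof
    fix x assume x: "x \<in> {x\<in>space ?P. enat l \<le> ?T x \<and> ?T x < enat (l + ma)}"
    then obtain n where n: "m \<le> n" "h \<le> S n x" "n < l + ma" by (auto simp: T_FMA_less_iff)
    have "\<forall>n\<in>{m..<l}. S n x < h" using x by (simp add: T_FMA_ge_iff)
    then have "\<not> n < l" using n by (meson atLeastLessThan_iff not_less)
    then have "n \<in> W" using n by (simp add: W_def)
    then show "x \<in> space ?P - no_alarm" using x n(2) unfolding no_alarm_def by fastforce
  qed
  then have "measure ?P {x\<in>space ?P. enat l \<le> ?T x \<and> ?T x < enat (l + ma)} \<le> 1 - prob no_alarm"
    using finite_measure_mono[OF _ sets.compl_sets[OF no_alarm_sets]] prob_compl[OF no_alarm_sets]
    by simp
  moreover have "measure ?P {x\<in>space ?P. S m x < h} ^ ma \<le> prob no_alarm"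
  proof -
    have "card W \<le> ma" by (simp add: W_def)
    then have "measure ?P {x\<in>space ?P. S m x < h} ^ ma \<le> measure ?P {x\<in>space ?P. S m x < h} ^ card W"
      by (intro power_decreasing) auto
    also have "\<dots> \<le> prob no_alarm"
      unfolding no_alarm_def by (rule prob_no_alarm_ge_power) (auto simp: W_def)
    finally show ?thesis .
  qed
  ultimately show ?thesis by simp
qed

lemma P_fa_le:
  "P_fa (P_cp f0 f1 m) (T_FMA f0 f1 m h) ma
    \<le> 1 - measure (P_cp f0 f1 m \<infinity>) {x\<in>space (P_cp f0 f1 m \<infinity>). S m x < h} ^ ma"
  unfolding P_fa_def by (rule cSUP_least) (auto intro: prob_false_alarm_window_le)

text \<open>Whether the alarm has been raised before the change depends only on the observations
  before v, the post-change window only on those from v on.\<close>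

lemma prob_no_alarm_before_and_window:
  assumes v: "1 \<le> v"
  shows "measure (P_cp f0 f1 m v) {x\<in>space (P_cp f0 f1 m v). (\<forall>n\<in>{m..<v}. S n x < h) \<and> S (v + m - 1) x < h}
       = measure (P_cp f0 f1 m v) {x\<in>space (P_cp f0 f1 m v). \<forall>n\<in>{m..<v}. S n x < h} * beta_md f0 f1 m h"
proof -
  let ?P = "PiM UNIV (Obs v)"
  interpret prob_space ?P by (rule prob_space_PiM_obs_measure)
  define I J where "I = {..<v}" and "J = {v..<v + m}"
  have before: "{n + 1 - m..n} \<subseteq> I" if "n \<in> {m..<v}" for n
    using that by (auto simp: I_def)
  have window: "{v + m - 1 + 1 - m..v + m - 1} \<subseteq> J"
    using v m_pos by (auto simp: J_def)
  have "emeasure ?P {x\<in>space ?P. (\<forall>n\<in>{m..<v}. S n x < h) \<and> S (v + m - 1) x < h}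
      = emeasure ?P {x\<in>space ?P. \<forall>n\<in>{m..<v}. S n x < h} * emeasure ?P {x\<in>space ?P. S (v + m - 1) x < h}"
  proof (rule emeasure_PiM_conj_eq_mult_disjoint[OF prob_space_obs_measure])
    show "finite I" "finite J" "I \<inter> J = {}" by (auto simp: I_def J_def)
    show "(\<forall>n\<in>{m..<v}. S n (restrict x I) < h) = (\<forall>n\<in>{m..<v}. S n x < h)" for x
      using S_stat_restrict[OF before] by simp
    show "(S (v + m - 1) (restrict x J) < h) = (S (v + m - 1) x < h)" for x
      using S_stat_restrict[OF window] by simp
    show "{y\<in>space (PiM I (Obs v)). \<forall>n\<in>{m..<v}. S n y < h} \<in> sets (PiM I (Obs v))"
      using before by (intro no_alarm_sets) auto
    show "{y\<in>space (PiM J (Obs v)). S (v + m - 1) y < h} \<in> sets (PiM J (Obs v))"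
      using window by (rule S_stat_level_sets(1))
    show "{y\<in>space (PiM (I \<union> J) (Obs v)). (\<forall>n\<in>{m..<v}. S n y < h) \<and> S (v + m - 1) y < h}
        \<in> sets (PiM (I \<union> J) (Obs v))"
      using before window by (intro sets.sets_Collect_conj no_alarm_sets S_stat_level_sets(1)) auto
  qed
  moreover have "measure ?P {x\<in>space ?P. S (v + m - 1) x < h} = beta_md f0 f1 m h"
  proof -
    have "Obs v (i + (v - 1)) = Obs (enat 1) i" for i
      using v by (auto simp: obs_measure_eq)
    moreover have "m + (v - 1) = v + m - 1" using v by simp
    ultimately show ?thesis
      using prob_S_stat_less_shift[of v "v - 1" "enat 1" h] by (simp add: beta_md_def P_cp_eq_PiM)
  qed
  ultimately show ?thesis by (simp add: P_cp_eq_PiM measure_def enn2real_mult)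
qed

lemma md_ratio_le_beta_md:
  assumes v: "1 \<le> v"
  shows "measure (P_cp f0 f1 m v) {x\<in>space (P_cp f0 f1 m v). enat (v + m) \<le> T_FMA f0 f1 m h x}
       / measure (P_cp f0 f1 m v) {x\<in>space (P_cp f0 f1 m v). enat v \<le> T_FMA f0 f1 m h x}
       \<le> beta_md f0 f1 m h"
proof -
  let ?P = "P_cp f0 f1 m v"
  interpret prob_space ?P unfolding P_cp_eq_PiM by (rule prob_space_PiM_obs_measure)
  let ?no_alarm = "{x\<in>space ?P. \<forall>n\<in>{m..<v}. S n x < h}"
  have "{x\<in>space ?P. enat (v + m) \<le> T_FMA f0 f1 m h x}
      \<subseteq> {x\<in>space ?P. (\<forall>n\<in>{m..<v}. S n x < h) \<and> S (v + m - 1) x < h}"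
    using v m_pos by (auto simp: T_FMA_ge_iff)
  moreover have "{x\<in>space ?P. (\<forall>n\<in>{m..<v}. S n x < h) \<and> S (v + m - 1) x < h} \<in> sets ?P"
    unfolding P_cp_eq_PiM by (intro sets.sets_Collect_conj no_alarm_sets S_stat_level_sets(1)) auto
  ultimately have "prob {x\<in>space ?P. enat (v + m) \<le> T_FMA f0 f1 m h x} \<le> prob ?no_alarm * beta_md f0 f1 m h"
    unfolding prob_no_alarm_before_and_window[OF v, symmetric] by (rule finite_measure_mono)
  moreover have "{x\<in>space ?P. enat v \<le> T_FMA f0 f1 m h x} = ?no_alarm"
    by (simp add: T_FMA_ge_iff)
  moreover have "0 \<le> beta_md f0 f1 m h" by (simp add: beta_md_def)
  ultimately show ?thesis
    by (cases "prob ?no_alarm = 0") (simp_all add: divide_le_eq mult.commute less_le)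
qed

lemma P_md_le_beta_md: "P_md (P_cp f0 f1 m) (T_FMA f0 f1 m h) m \<le> beta_md f0 f1 m h"
  unfolding P_md_def by (rule cSUP_least) (auto intro: md_ratio_le_beta_md)

lemma mono_F0_cdf: "mono (F0_cdf f0 f1 m)"
proof
  fix s t :: real assume "s \<le> t"
  interpret prob_space "PiM UNIV (Obs \<infinity>)" by (rule prob_space_PiM_obs_measure)
  show "F0_cdf f0 f1 m s \<le> F0_cdf f0 f1 m t"
    unfolding F0_cdf_def P_cp_eq_PiM
    using \<open>s \<le> t\<close> S_stat_level_sets(2)[of m UNIV \<infinity> t] by (intro finite_measure_mono) auto
qed

lemma mono_beta_md: "mono (beta_md f0 f1 m)"
proof
  fix s t :: real assume "s \<le> t"
  interpret prob_space "PiM UNIV (Obs (enat 1))" by (rule prob_space_PiM_obs_measure)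
  show "beta_md f0 f1 m s \<le> beta_md f0 f1 m t"
    unfolding beta_md_def P_cp_eq_PiM
    using \<open>s \<le> t\<close> S_stat_level_sets(1)[of m UNIV "enat 1" t] by (intro finite_measure_mono) auto
qed

lemma prob_S_stat_less_eq_F0_cdf:
  assumes "{0<..<1} \<subseteq> range (F0_cdf f0 f1 m)"
  shows "measure (P_cp f0 f1 m \<infinity>) {x\<in>space (P_cp f0 f1 m \<infinity>). S m x < h} = F0_cdf f0 f1 m h"
  unfolding F0_cdf_def
proof (rule prob_space.prob_less_eq_prob_le_if_cdf_onto)
  show "prob_space (P_cp f0 f1 m \<infinity>)" "S m \<in> borel_measurable (P_cp f0 f1 m \<infinity>)"
    unfolding P_cp_eq_PiM by (auto intro: prob_space_PiM_obs_measure S_stat_measurable)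
  show "{0<..<1} \<subseteq> range (\<lambda>t. measure (P_cp f0 f1 m \<infinity>) {x\<in>space (P_cp f0 f1 m \<infinity>). S m x \<le> t})"
    using assms by (simp add: F0_cdf_def)
qed

lemma strict_mono_F0_cdf:
  assumes "bij_betw (F0_cdf f0 f1 m) UNIV {0<..<1}"
  shows "strict_mono (F0_cdf f0 f1 m)"
proof
  fix s t :: real assume "s < t"
  moreover have "F0_cdf f0 f1 m s \<noteq> F0_cdf f0 f1 m t \<or> s = t"
    using inj_onD[OF bij_betw_imp_inj_on[OF assms], of s t] by auto
  ultimately show "F0_cdf f0 f1 m s < F0_cdf f0 f1 m t"
    using monoD[OF mono_F0_cdf, of s t] by auto
qed

lemma P_fa_le_F0_cdf:
  assumes "bij_betw (F0_cdf f0 f1 m) UNIV {0<..<1}"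
  shows "P_fa (P_cp f0 f1 m) (T_FMA f0 f1 m h) ma \<le> 1 - F0_cdf f0 f1 m h ^ ma"
  using P_fa_le[of h ma] bij_betw_imp_surj_on[OF assms] prob_S_stat_less_eq_F0_cdf by simp

lemma absolutely_continuous_first_window:
  "absolutely_continuous (PiM {1..m} (Obs \<infinity>)) (PiM {1..m} (Obs (enat 1)))"
proof (rule absolutely_continuous_PiM[OF prob_space_obs_measure prob_space_obs_measure])
  show "sets (Obs \<infinity> i) = sets (Obs (enat 1) i)" for i by (simp add: sets_obs_measure)
  have "AE t in density lborel (\<lambda>t. ennreal (f1 t)). 0 < ennreal (f0 t)"
    using f0_pos_AE_f1 by eventually_elim simp
  then show "absolutely_continuous (Obs \<infinity> i) (Obs (enat 1) i)" if "i \<in> {1..m}" for i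
    using that by (simp add: obs_measure_eq absolutely_continuous_density_density)
qed simp

lemma prob_S_stat_eq_post_change_eq_0:
  assumes "measure (P_cp f0 f1 m \<infinity>) {x\<in>space (P_cp f0 f1 m \<infinity>). S m x = h} = 0"
  shows "measure (P_cp f0 f1 m (enat 1)) {x\<in>space (P_cp f0 f1 m (enat 1)). S m x = h} = 0"
proof -
  let ?J = "{1..m}"
  have window: "{m + 1 - m..m} \<subseteq> ?J" by simp
  have depends: "(S m (restrict x ?J) = h) = (S m x = h)" for x
    using S_stat_restrict[OF window] by simp
  have PiM_eq: "emeasure (PiM UNIV (Obs v)) {x\<in>space (PiM UNIV (Obs v)). S m x = h}
      = emeasure (PiM ?J (Obs v)) {x\<in>space (PiM ?J (Obs v)). S m x = h}" for v
    by (rule emeasure_PiM_UNIV_eq_PiM_finite[OF prob_space_obs_measure _ depends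
          S_stat_level_sets(3)[OF window]]) simp
  interpret P0: prob_space "PiM UNIV (Obs \<infinity>)" by (rule prob_space_PiM_obs_measure)
  have "emeasure (PiM ?J (Obs \<infinity>)) {x\<in>space (PiM ?J (Obs \<infinity>)). S m x = h} = 0"
    using assms PiM_eq[of \<infinity>] by (simp add: P_cp_eq_PiM P0.emeasure_eq_measure)
  then have "{x\<in>space (PiM ?J (Obs \<infinity>)). S m x = h} \<in> null_sets (PiM ?J (Obs \<infinity>))"
    by (rule null_setsI) (rule S_stat_level_sets(3)[OF window])
  moreover have "space (PiM ?J (Obs \<infinity>)) = space (PiM ?J (Obs (enat 1)))"
    by (simp add: space_PiM sets_eq_imp_space_eq[OF sets_obs_measure])
  ultimately have "emeasure (PiM ?J (Obs (enat 1))) {x\<in>space (PiM ?J (Obs (enat 1))). S m x = h} = 0"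
    using absolutely_continuous_first_window by (auto simp: absolutely_continuous_def)
  then show ?thesis using PiM_eq[of "enat 1"] by (simp add: P_cp_eq_PiM measure_def)
qed

lemma beta_md_eq_F1_cdf:
  assumes no_atom: "measure (P_cp f0 f1 m \<infinity>) {x\<in>space (P_cp f0 f1 m \<infinity>). S m x < h} = F0_cdf f0 f1 m h"
  shows "beta_md f0 f1 m h = F1_cdf f0 f1 m h"
proof -
  have prob_le_eq: "measure (P_cp f0 f1 m v) {x\<in>space (P_cp f0 f1 m v). S m x \<le> h}
      = measure (P_cp f0 f1 m v) {x\<in>space (P_cp f0 f1 m v). S m x < h}
        + measure (P_cp f0 f1 m v) {x\<in>space (P_cp f0 f1 m v). S m x = h}" for v
  proof -
    interpret prob_space "PiM UNIV (Obs v)" by (rule prob_space_PiM_obs_measure)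
    have "{x\<in>space (PiM UNIV (Obs v)). S m x \<le> h}
        = {x\<in>space (PiM UNIV (Obs v)). S m x < h} \<union> {x\<in>space (PiM UNIV (Obs v)). S m x = h}"
      by auto
    then show ?thesis
      using finite_measure_Union[OF S_stat_level_sets(1,3)[of m UNIV v h]] by (auto simp: P_cp_eq_PiM)
  qed
  have "measure (P_cp f0 f1 m \<infinity>) {x\<in>space (P_cp f0 f1 m \<infinity>). S m x = h} = 0"
    using prob_le_eq[of \<infinity>] no_atom by (simp add: F0_cdf_def)
  then show ?thesis
    using prob_le_eq[of "enat 1"] prob_S_stat_eq_post_change_eq_0 by (simp add: beta_md_def F1_cdf_def)
qed

end

theorem corollary1:
  fixes m ma :: nat and f0 f1 :: "real \<Rightarrow> real" and a :: real
  assumes "1 \<le> m" and "1 \<le> ma"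
    and "f0 \<in> borel_measurable borel" and "f1 \<in> borel_measurable borel"
    and "\<And>t. 0 \<le> f0 t" and "\<And>t. 0 \<le> f1 t"
    and "prob_space (density lborel (\<lambda>t. ennreal (f0 t)))"
    and "prob_space (density lborel (\<lambda>t. ennreal (f1 t)))"
    and "density lborel (\<lambda>t. ennreal (f0 t)) \<noteq> density lborel (\<lambda>t. ennreal (f1 t))"
    and "AE t in density lborel (\<lambda>t. ennreal (f0 t)). 0 < f0 t \<and> 0 < f1 t"
    and "AE t in density lborel (\<lambda>t. ennreal (f1 t)). 0 < f0 t \<and> 0 < f1 t"
    and "bij_betw (F0_cdf f0 f1 m) UNIV {0<..<1}"
    and "0 < a" and "a < 1"
  shows "P_fa (P_cp f0 f1 m) (T_FMA f0 f1 m (h_thr f0 f1 m ma a)) ma \<le> a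
       \<and> beta_md f0 f1 m (h_thr f0 f1 m ma a)
           = F1_cdf f0 f1 m (inv (F0_cdf f0 f1 m) ((1 - a) powr (1 / real ma)))
       \<and> (\<forall>h'. P_fa (P_cp f0 f1 m) (T_FMA f0 f1 m h') ma = a \<longrightarrow>
             P_md (P_cp f0 f1 m) (T_FMA f0 f1 m h') m \<le> beta_md f0 f1 m (h_thr f0 f1 m ma a))"
proof -
  have "AE t in density lborel (\<lambda>t. ennreal (f1 t)). 0 < f0 t"
    using assms(11) by eventually_elim simp
  then interpret change_point f0 f1 m by (rule change_point.intro[OF assms(1,3,4,7,8)])
  let ?F0 = "F0_cdf f0 f1 m" and ?h = "h_thr f0 f1 m ma a"
  define c where "c = (1 - a) powr (1 / real ma)"
  have "c = root ma (1 - a)" using assms(2,14) by (simp add: c_def root_powr_inverse)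
  then have c: "0 < c" "c < 1" "c ^ ma = 1 - a" using assms(2,13,14) by simp_all
  have F0_h: "?F0 ?h = c"
    unfolding h_thr_def c_def[symmetric] by (rule bij_betw_inv_into_right[OF assms(12)]) (use c in auto)
  show ?thesis
  proof (intro conjI allI impI)
    show "P_fa (P_cp f0 f1 m) (T_FMA f0 f1 m ?h) ma \<le> a"
      using P_fa_le_F0_cdf[OF assms(12), of ?h ma] F0_h c by simp
    show "beta_md f0 f1 m ?h = F1_cdf f0 f1 m (inv ?F0 ((1 - a) powr (1 / real ma)))"
      using beta_md_eq_F1_cdf prob_S_stat_less_eq_F0_cdf bij_betw_imp_surj_on[OF assms(12)]
      by (simp add: h_thr_def)
    fix h' assume P_fa_h': "P_fa (P_cp f0 f1 m) (T_FMA f0 f1 m h') ma = a"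
    have "\<not> c ^ ma < ?F0 h' ^ ma" using P_fa_le_F0_cdf[OF assms(12), of h' ma] P_fa_h' c(3) by simp
    then have "?F0 h' \<le> ?F0 ?h"
      unfolding F0_h using c(1) assms(2) by (meson not_le power_strict_mono less_imp_le zero_less_one
          less_le_trans)
    then have "h' \<le> ?h" using strict_mono_less_eq[OF strict_mono_F0_cdf[OF assms(12)]] by simp
    then show "P_md (P_cp f0 f1 m) (T_FMA f0 f1 m h') m \<le> beta_md f0 f1 m ?h"
      using P_md_le_beta_md[of h'] monoD[OF mono_beta_md] by (meson order_trans)
  qed
qed

end
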